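(* Let $n$ be a nonnegative integer and $a,b\in\mathbb{C}$ such that all expressions below are defined (no lower parameter zero or a negative integer). Then \[ \left[{}_3F_2\!\left(\left.{\frac{a}{2},\frac{a+1}{2},b \atop a,1+a+n}\right| 4\right)\right]_n =\frac{(b)_n}{n!}\,{}_4F_3\!\left(\left.{-n,\frac{1+a-b}{2},\frac{2+a-b}{2},1 \atop 1+a-b,1-b-n,1+a+n}\right| 4\right). \]
   Context: For $a\in\mathbb{C}$, $(a)_0=1$ and $(a)_k=a(a+1)\cdots(a+k-1)$ for $k\ge1$. The hypergeometric series is ${}_rF_s\!\left(\left.{\alpha_1,\ldots,\alpha_r\atop \beta_1,\ldots,\beta_s}\right|z\right)=\sum_{k\ge0}\frac{(\alpha_1)_k\cdots(\alpha_r)_k}{k!(\beta_1)_k\cdots(\beta_s)_k}z^k$, with no lower parameter zero or a negative integer; it is a finite sum when an upper parameter is $-n$. The bracket $\left[{}_rF_s\!\left(\left.{\alpha_1,\ldots,\alpha_r\atop \beta_1,\ldots,\beta_s}\right|z\right)\right]_n$ denotes the sum of the first $n+1$ terms, $\sum_{k=0}^{n}\frac{(\alpha_1)_k\cdots(\alpha_r)_k}{k!(\beta_1)_k\cdots(\beta_s)_k}z^k$. *)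

theory Defs
  imports Complex_Main "HOL-Library.Nonpos_Ints"
begin

definition hyp_term :: "complex list \<Rightarrow> complex list \<Rightarrow> complex \<Rightarrow> nat \<Rightarrow> complex" where
  "hyp_term as bs z k =
     (\<Prod>a\<leftarrow>as. pochhammer a k) / (fact k * (\<Prod>b\<leftarrow>bs. pochhammer b k)) * z ^ k"

definition hypF :: "complex list \<Rightarrow> complex list \<Rightarrow> complex \<Rightarrow> complex" where
  "hypF as bs z = (\<Sum>k. hyp_term as bs z k)"

definition hypF_trunc :: "complex list \<Rightarrow> complex list \<Rightarrow> complex \<Rightarrow> nat \<Rightarrow> complex" where
  "hypF_trunc as bs z n = (\<Sum>k\<le>n. hyp_term as bs z k)"

end

theory Submission
  imports Defs "HOL-Computational_Algebra.Formal_Power_Series"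
begin

text \<open>
  The duplication formula \<open>4^k (x/2)\<^sub>k ((x+1)/2)\<^sub>k = (x)\<^sub>k (x+k)\<^sub>k\<close> cancels the lower
  parameter \<open>x\<close> on both sides. The \<open>k\<close>-th term on the left becomes
  \<open>(b)\<^sub>k/k! \<cdot> (a+k)\<^sub>k/(c)\<^sub>k\<close> and the \<open>j\<close>-th term on the right, multiplied by \<open>(b)\<^sub>n/n!\<close>, becomes
  \<open>(b)\<^sub>n\<^sub>-\<^sub>j/(n-j)! \<cdot> (1+a-b+j)\<^sub>j/(c)\<^sub>j\<close>, where \<open>c = 1+a+n\<close>.
  Chu-Vandermonde expands \<open>(a+k)\<^sub>k/(c)\<^sub>k\<close> as a sum over \<open>l \<le> k\<close>; reflecting
  \<open>(1+a-b+j)\<^sub>j\<close> and splitting it by the binomial theorem for Pochhammer symbols at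
  \<open>b+n-j\<close> gives a sum over \<open>i \<le> j\<close> in which \<open>(b)\<^sub>n\<^sub>-\<^sub>j (b+n-j)\<^sub>i = (b)\<^sub>n\<^sub>-\<^sub>j\<^sub>+\<^sub>i\<close>.
  The two double sums then agree termwise under \<open>(k, l) = (n-j+i, i)\<close>.
\<close>

lemma pochhammer_nonzero_if_not_nonpos_Int:
  fixes x :: "'a::field_char_0"
  assumes "x \<notin> \<int>\<^sub>\<le>\<^sub>0"
  shows "pochhammer x k \<noteq> 0"
  using assms by (auto simp: pochhammer_eq_0_iff)

lemma pochhammer_of_nat_Suc_nonzero: "pochhammer (of_nat m + 1 :: 'a::field_char_0) l \<noteq> 0"
  by (rule pochhammer_nonzero_if_not_nonpos_Int)
     (metis of_nat_Suc of_nat_in_nonpos_Ints_iff nat.distinct(1) add.commute)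

lemma pochhammer_duplication:
  fixes x :: "'a::field_char_0"
  shows "4 ^ k * pochhammer (x / 2) k * pochhammer ((x + 1) / 2) k
       = pochhammer x k * pochhammer (x + of_nat k) k"
proof -
  have "pochhammer x (2 * k) = of_nat (2 ^ (2 * k)) * pochhammer (x / 2) k * pochhammer ((x + 1) / 2) k"
    using pochhammer_double[of "x / 2" k] by (simp add: add_divide_distrib)
  moreover have "pochhammer x (2 * k) = pochhammer x k * pochhammer (x + of_nat k) k"
    using pochhammer_product'[of x k k] by (simp add: mult_2)
  ultimately show ?thesis
    by (simp add: power_mult)
qed

lemma pochhammer_minus_of_nat:
  assumes "j \<le> n"
  shows "pochhammer (- of_nat n :: 'a::field_char_0) j = (- 1) ^ j * fact n / fact (n - j)"
proof -
  have "fact n = (fact (n - j) :: 'a) * pochhammer (of_nat n - of_nat j + 1) j"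
    using pochhammer_product[of "n - j" n "1::'a"] assms by (simp add: pochhammer_fact add.commute)
  then show ?thesis
    by (simp add: pochhammer_minus)
qed

lemma Chu_Vandermonde:
  fixes c :: "'a::field_char_0"
  assumes "c \<notin> \<int>\<^sub>\<le>\<^sub>0"
  shows "(\<Sum>l\<le>k. pochhammer d l * pochhammer (- of_nat k) l / (fact l * pochhammer c l))
       = pochhammer (c - d) k / pochhammer c k"
proof -
  have "\<forall>i \<in> {0..<k}. c \<noteq> - of_nat i"
    using assms by (metis minus_of_nat_in_nonpos_Ints)
  from Vandermonde_pochhammer[OF this, of d] show ?thesis
    by (simp add: atLeast0AtMost)
qed

lemma pochhammer_reflect_binomial_sum:
  fixes x u v :: "'a::comm_ring_1"
  assumes "u + v = 1 - x - 2 * of_nat j"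
  shows "pochhammer (x + of_nat j) j
       = (- 1) ^ j * (\<Sum>i\<le>j. of_nat (j choose i) * pochhammer u i * pochhammer v (j - i))"
proof -
  have "pochhammer (x + of_nat j) j = (- 1) ^ j * pochhammer (1 - x - 2 * of_nat j) j"
    using pochhammer_minus'[of "x + 2 * of_nat j - 1" j] by (simp add: algebra_simps)
  then show ?thesis
    by (simp flip: assms add: pochhammer_binomial_sum)
qed

lemma hyp_term_neg_nat_eq_0:
  assumes "n < j"
  shows "hyp_term (- of_nat n # as) bs z j = 0"
  using assms by (simp add: hyp_term_def pochhammer_of_nat_eq_0_iff)

lemma hypF_neg_nat_eq_hypF_trunc:
  "hypF (- of_nat n # as) bs z = hypF_trunc (- of_nat n # as) bs z n"
  unfolding hypF_def hypF_trunc_def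
  by (rule suminf_finite) (auto intro: hyp_term_neg_nat_eq_0)

lemma hypF_trunc_duplication_as_double_sum:
  fixes a b :: complex
  assumes "a \<notin> \<int>\<^sub>\<le>\<^sub>0" and "1 + a + of_nat n \<notin> \<int>\<^sub>\<le>\<^sub>0"
  shows "hypF_trunc [a / 2, (a + 1) / 2, b] [a, 1 + a + of_nat n] 4 n
       = (\<Sum>k\<le>n. \<Sum>l\<le>k. pochhammer b k / fact k * (pochhammer (of_nat (n - k) + 1) l
           * pochhammer (- of_nat k) l / (fact l * pochhammer (1 + a + of_nat n) l)))"
  unfolding hypF_trunc_def
proof (intro sum.cong refl)
  fix k assume "k \<in> {..n}"
  then have "1 + a + of_nat n - (of_nat (n - k) + 1) = a + of_nat k"
    by (simp add: of_nat_diff)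
  then have "(\<Sum>l\<le>k. pochhammer (of_nat (n - k) + 1) l * pochhammer (- of_nat k) l
        / (fact l * pochhammer (1 + a + of_nat n) l))
      = pochhammer (a + of_nat k) k / pochhammer (1 + a + of_nat n) k"
    by (simp add: Chu_Vandermonde[OF assms(2)])
  moreover have "hyp_term [a / 2, (a + 1) / 2, b] [a, 1 + a + of_nat n] 4 k
      = pochhammer b k / fact k * (pochhammer (a + of_nat k) k / pochhammer (1 + a + of_nat n) k)"
    using pochhammer_duplication[of k a] pochhammer_nonzero_if_not_nonpos_Int[OF assms(1), of k]
    by (simp add: hyp_term_def field_simps)
  ultimately show "hyp_term [a / 2, (a + 1) / 2, b] [a, 1 + a + of_nat n] 4 k
      = (\<Sum>l\<le>k. pochhammer b k / fact k * (pochhammer (of_nat (n - k) + 1) l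
           * pochhammer (- of_nat k) l / (fact l * pochhammer (1 + a + of_nat n) l)))"
    by (simp only: sum_distrib_left[symmetric])
qed

lemma hyp_term_terminating_duplication:
  fixes a b c :: complex
  assumes "j \<le> n" and "1 + a - b \<notin> \<int>\<^sub>\<le>\<^sub>0" and "1 - b - of_nat n \<notin> \<int>\<^sub>\<le>\<^sub>0"
  shows "pochhammer b n / fact n
         * hyp_term [- of_nat n, (1 + a - b) / 2, (2 + a - b) / 2, 1] [1 + a - b, 1 - b - of_nat n, c] 4 j
       = pochhammer b (n - j) / fact (n - j) * (pochhammer (1 + a - b + of_nat j) j / pochhammer c j)"
proof -
  have "pochhammer b n = pochhammer b (n - j) * pochhammer (b + of_nat n - of_nat j) j"
    using pochhammer_product[of "n - j" n b] assms(1) by (simp add: of_nat_diff add_diff_eq)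
  moreover have reflect: "pochhammer (1 - b - of_nat n) j = (- 1) ^ j * pochhammer (b + of_nat n - of_nat j) j"
    using pochhammer_minus[of "b + of_nat n - 1" j] by (simp add: algebra_simps)
  moreover have "4 ^ j * pochhammer ((1 + a - b) / 2) j * pochhammer ((2 + a - b) / 2) j
      = pochhammer (1 + a - b) j * pochhammer (1 + a - b + of_nat j) j"
  proof -
    have half: "(1 + a - b + 1) / 2 = (2 + a - b) / 2"
      by simp
    show ?thesis
      using pochhammer_duplication[of j "1 + a - b", unfolded half] .
  qed
  moreover have "pochhammer (1 + a - b) j \<noteq> 0"
    using pochhammer_nonzero_if_not_nonpos_Int[OF assms(2)] .
  moreover have "pochhammer (b + of_nat n - of_nat j) j \<noteq> 0"
    using pochhammer_nonzero_if_not_nonpos_Int[OF assms(3), of j] reflect by auto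
  ultimately show ?thesis
    by (simp add: hyp_term_def pochhammer_minus_of_nat[OF assms(1)] pochhammer_fact[symmetric] field_simps)
qed

lemma hypF_terminating_duplication_as_double_sum:
  fixes a b c :: complex
  assumes "1 + a - b \<notin> \<int>\<^sub>\<le>\<^sub>0" and "1 - b - of_nat n \<notin> \<int>\<^sub>\<le>\<^sub>0"
  shows "pochhammer b n / fact n
         * hypF [- of_nat n, (1 + a - b) / 2, (2 + a - b) / 2, 1] [1 + a - b, 1 - b - of_nat n, c] 4
       = (\<Sum>j\<le>n. \<Sum>i\<le>j. pochhammer b (n - j) / fact (n - j) * ((- 1) ^ j
           * (of_nat (j choose i) * pochhammer (b + of_nat (n - j)) i
              * pochhammer (- a - of_nat n - of_nat j) (j - i)) / pochhammer c j))"
  unfolding hypF_neg_nat_eq_hypF_trunc hypF_trunc_def sum_distrib_left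
proof (intro sum.cong refl)
  fix j assume "j \<in> {..n}"
  then have j: "j \<le> n"
    by simp
  have "pochhammer (1 + a - b + of_nat j) j = (- 1) ^ j * (\<Sum>i\<le>j. of_nat (j choose i)
      * pochhammer (b + of_nat (n - j)) i * pochhammer (- a - of_nat n - of_nat j) (j - i))"
    by (rule pochhammer_reflect_binomial_sum) (use j in \<open>simp add: of_nat_diff\<close>)
  then show "pochhammer b n / fact n
         * hyp_term [- of_nat n, (1 + a - b) / 2, (2 + a - b) / 2, 1] [1 + a - b, 1 - b - of_nat n, c] 4 j
       = (\<Sum>i\<le>j. pochhammer b (n - j) / fact (n - j) * ((- 1) ^ j
           * (of_nat (j choose i) * pochhammer (b + of_nat (n - j)) i
              * pochhammer (- a - of_nat n - of_nat j) (j - i)) / pochhammer c j))"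
    unfolding hyp_term_terminating_duplication[OF j assms]
    by (simp add: sum_distrib_left sum_divide_distrib)
qed

lemma sum_triangle_reflect:
  fixes n :: nat
  shows "(\<Sum>k\<le>n. \<Sum>l\<le>k. f k l) = (\<Sum>j\<le>n. \<Sum>i\<le>j. f (n - j + i) i)"
proof -
  have "(\<Sum>k\<le>n. \<Sum>l\<le>k. f k l) = (\<Sum>(k, l)\<in>Sigma {..n} (\<lambda>k. {..k}). f k l)"
    by (rule sum.Sigma) auto
  also have "\<dots> = (\<Sum>(j, i)\<in>Sigma {..n} (\<lambda>j. {..j}). f (n - j + i) i)"
    by (rule sum.reindex_bij_witness[where i = "\<lambda>(j, i). (n - j + i, i)" and j = "\<lambda>(k, l). (n - k + l, l)"])
       auto
  also have "\<dots> = (\<Sum>j\<le>n. \<Sum>i\<le>j. f (n - j + i) i)"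
    by (rule sum.Sigma[symmetric]) auto
  finally show ?thesis .
qed

text \<open>The indices are \<open>(k, l) = (l + p, l)\<close> and \<open>(j, i) = (l + m, l)\<close> with \<open>n = l + p + m\<close>,
  which avoids truncated subtraction.\<close>

lemma double_sum_terms_agree:
  fixes a b :: complex and l p m :: nat
  defines "c \<equiv> 1 + a + of_nat (l + p + m)"
  assumes "c \<notin> \<int>\<^sub>\<le>\<^sub>0"
  shows "pochhammer b (l + p) / fact (l + p)
         * (pochhammer (of_nat m + 1) l * pochhammer (- of_nat (l + p)) l / (fact l * pochhammer c l))
       = pochhammer b p / fact p * ((- 1) ^ (l + m) * (of_nat ((l + m) choose l) * pochhammer (b + of_nat p) l
           * pochhammer (- a - of_nat (l + p + m) - of_nat (l + m)) m) / pochhammer c (l + m))"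
proof -
  have "pochhammer b (l + p) = pochhammer b p * pochhammer (b + of_nat p) l"
    using pochhammer_product'[of b p l] by (simp add: add.commute)
  moreover have "fact (l + p) = (fact p :: complex) * pochhammer (of_nat p + 1) l"
    using pochhammer_product'[of 1 p l] by (simp add: pochhammer_fact add_ac)
  moreover have "fact (l + m) = (fact m :: complex) * pochhammer (of_nat m + 1) l"
    using pochhammer_product'[of 1 m l] by (simp add: pochhammer_fact add_ac)
  moreover have "pochhammer (- of_nat (l + p)) l = (- 1) ^ l * (pochhammer (of_nat p + 1) l :: complex)"
    using pochhammer_minus[of "of_nat (l + p) :: complex" l] by (simp add: algebra_simps)
  moreover have "pochhammer (- a - of_nat (l + p + m) - of_nat (l + m)) m
      = (- 1) ^ m * pochhammer (c + of_nat l) m"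
    using pochhammer_minus[of "a + of_nat (l + p + m) + of_nat (l + m)" m] by (simp add: c_def algebra_simps)
  moreover have c_split: "pochhammer c (l + m) = pochhammer c l * pochhammer (c + of_nat l) m"
    by (rule pochhammer_product')
  moreover have "pochhammer c l \<noteq> 0" and "pochhammer (c + of_nat l) m \<noteq> 0"
    using pochhammer_nonzero_if_not_nonpos_Int[OF assms(2), of "l + m"] c_split by auto
  moreover have "pochhammer (of_nat p + 1) l \<noteq> (0::complex)" "pochhammer (of_nat m + 1) l \<noteq> (0::complex)"
    by (rule pochhammer_of_nat_Suc_nonzero)+
  ultimately show ?thesis
    by (simp add: binomial_fact power_add field_simps)
qed

theorem mainTheorem10:
  fixes n :: nat and a b :: complex
  assumes "a \<notin> \<int>\<^sub>\<le>\<^sub>0"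
    and "1 + a + of_nat n \<notin> \<int>\<^sub>\<le>\<^sub>0"
    and "1 + a - b \<notin> \<int>\<^sub>\<le>\<^sub>0"
    and "1 - b - of_nat n \<notin> \<int>\<^sub>\<le>\<^sub>0"
  shows "hypF_trunc [a / 2, (a + 1) / 2, b] [a, 1 + a + of_nat n] 4 n
       = pochhammer b n / fact n *
         hypF [- of_nat n, (1 + a - b) / 2, (2 + a - b) / 2, 1]
              [1 + a - b, 1 - b - of_nat n, 1 + a + of_nat n] 4"
proof -
  define F where "F k l = pochhammer b k / fact k * (pochhammer (of_nat (n - k) + 1) l
    * pochhammer (- of_nat k) l / (fact l * pochhammer (1 + a + of_nat n) l))" for k l
  define G where "G j i = pochhammer b (n - j) / fact (n - j) * ((- 1) ^ j * (of_nat (j choose i)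
    * pochhammer (b + of_nat (n - j)) i * pochhammer (- a - of_nat n - of_nat j) (j - i))
    / pochhammer (1 + a + of_nat n) j)" for j i
  have terms_agree: "F (n - j + i) i = G j i" if "i \<le> j" "j \<le> n" for i j
  proof -
    from that obtain m p where "j = i + m" "n = j + p"
      by (auto simp: le_iff_add)
    then show ?thesis
      using double_sum_terms_agree[of a i p m b] assms(2) by (simp add: F_def G_def add_ac)
  qed
  have "hypF_trunc [a / 2, (a + 1) / 2, b] [a, 1 + a + of_nat n] 4 n = (\<Sum>k\<le>n. \<Sum>l\<le>k. F k l)"
    unfolding F_def by (rule hypF_trunc_duplication_as_double_sum[OF assms(1,2)])
  also have "\<dots> = (\<Sum>j\<le>n. \<Sum>i\<le>j. F (n - j + i) i)"
    by (rule sum_triangle_reflect)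
  also have "\<dots> = (\<Sum>j\<le>n. \<Sum>i\<le>j. G j i)"
    using terms_agree by (intro sum.cong refl) auto
  also have "\<dots> = pochhammer b n / fact n * hypF [- of_nat n, (1 + a - b) / 2, (2 + a - b) / 2, 1]
      [1 + a - b, 1 - b - of_nat n, 1 + a + of_nat n] 4"
    unfolding G_def by (rule hypF_terminating_duplication_as_double_sum[OF assms(3,4), symmetric])
  finally show ?thesis .
qed

end
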